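(* Let $A\in\mathbb R^{n\times n}$ be Hurwitz, $L\in\mathbb R^{n\times m}$, and $G_{yv}(s):=(sI-A)^{-1}L$. Let $P,\overline P,P^\dagger,\overline P^\dagger$ be matrices with $PP^\dagger=I$, $\overline P\,\overline P^\dagger=I$ satisfying: (C1) $P^\dagger P+\overline P^\dagger\overline P=I_n$; (C2) $PAP^\dagger$ and $\overline PA\overline P^\dagger$ are Hurwitz; (C3) $PL=0$ and $\overline PL$ is nonsingular. Define $$X(s):=P-(sI-PAP^\dagger)^{-1}PA\overline P^\dagger\overline P.$$ Then a transfer matrix $Q\in\mathcal{RH}_\infty$ (with $n$ columns) satisfies $Q\,G_{yv}=0$ if and only if there exists $\hat Q\in\mathcal{RH}_\infty$ such that $Q=\hat QX$.
   Context: $\mathcal{RH}_\infty$ denotes the set of stable, proper, real rational transfer matrices. A square real matrix is Hurwitz if all its eigenvalues have negative real part. *)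

theory Defs
  imports "HOL-Analysis.Analysis" "HOL-Computational_Algebra.Fraction_Field"
          "HOL-Computational_Algebra.Polynomial"
begin

text \<open>Real rational functions in s: the fraction field of real polynomials.
  Transfer matrices are matrices with entries in this field.\<close>
type_synonym rfun = "real poly fract"

definition const_rf :: "real \<Rightarrow> rfun" where
  "const_rf c = Fract [:c:] 1"

definition svar :: rfun where
  "svar = Fract [:0, 1:] 1"

definition rmat :: "real^'c^'r \<Rightarrow> rfun^'c^'r" where
  "rmat A = (\<chi> i j. const_rf (A $ i $ j))"

definition sI :: "rfun^'n^'n" where
  "sI = (\<chi> i j. if i = j then svar else 0)"

definition RH_inf_fun :: "rfun \<Rightarrow> bool" where
  "RH_inf_fun f \<longleftrightarrow> (\<exists>num den. f = Fract num den \<and> degree num \<le> degree den \<and>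
      (\<forall>z::complex. Re z \<ge> 0 \<longrightarrow> poly (map_poly complex_of_real den) z \<noteq> 0))"

definition RH_inf :: "rfun^'c^'r \<Rightarrow> bool" where
  "RH_inf Q \<longleftrightarrow> (\<forall>i j. RH_inf_fun (Q $ i $ j))"

definition hurwitz :: "real^'n^'n \<Rightarrow> bool" where
  "hurwitz A \<longleftrightarrow> (\<forall>(e::complex) (v::complex^'n). v \<noteq> 0 \<and>
      (\<chi> i j. complex_of_real (A $ i $ j)) *v v = e *s v \<longrightarrow> Re e < 0)"

end

theory Submission
  imports Defs "HOL-Computational_Algebra.Polynomial_Factorial"
begin

text \<open>Write \<open>N = sI - A\<close> and \<open>K = sI - P A P\<^sup>\<dagger>\<close>. Condition (C1) gives the
  intertwining relation \<open>K P = P N + P A P\<^sup>\<dagger>\<^sub>b P\<^sub>b\<close>, i.e. \<open>X = K\<^sup>-\<^sup>1 P N\<close>, so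
  \<open>X G\<^sub>y\<^sub>v = K\<^sup>-\<^sup>1 P L = 0\<close> by (C3) and every \<open>Q\<^sub>h X\<close> annihilates \<open>G\<^sub>y\<^sub>v\<close>. Conversely,
  if \<open>R = Q N\<^sup>-\<^sup>1\<close> kills \<open>L\<close> then it kills \<open>P\<^sup>\<dagger>\<^sub>b\<close> (as \<open>P\<^sub>b L\<close> is invertible), hence
  \<open>R P\<^sup>\<dagger> P = R\<close> by (C1); this gives \<open>R P\<^sup>\<dagger> K = R N P\<^sup>\<dagger> = Q P\<^sup>\<dagger>\<close> and therefore
  \<open>Q = (Q P\<^sup>\<dagger>) X\<close>, where \<open>Q P\<^sup>\<dagger>\<close> is stable and proper together with \<open>Q\<close>.\<close>

lemma matrix_add_rdistrib: "(B + C) ** A = B ** A + C ** A"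
  by (vector matrix_matrix_mult_def sum.distrib[symmetric] field_simps)

lemma matrix_diff_ldistrib: "A ** (B - C) = A ** B - A ** (C :: 'a::ring_1^_^_)"
  by (vector matrix_matrix_mult_def sum_subtractf[symmetric] field_simps)

lemma matrix_diff_rdistrib: "(B - C) ** A = B ** A - C ** (A :: 'a::ring_1^_^_)"
  by (vector matrix_matrix_mult_def sum_subtractf[symmetric] field_simps)

lemma mat_matrix_mult_commute:
  "mat (c :: 'a::comm_semiring_1) ** (M :: 'a^'n^'m) = M ** mat c"
  by (simp add: vec_eq_iff matrix_matrix_mult_def mat_def if_distrib if_distribR
      sum.delta sum.delta' mult.commute cong: if_cong)

lemma invertible_imp_matrix_inv:
  assumes "invertible M"
  shows "M ** matrix_inv M = mat 1" "matrix_inv M ** M = mat 1"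
  using someI_ex[OF assms[unfolded invertible_def]] by (simp_all add: matrix_inv_def)

lemma det_map_ring_hom:
  fixes f :: "'a::comm_ring_1 \<Rightarrow> 'b::comm_ring_1"
  assumes add: "\<And>x y. f (x + y) = f x + f y" and mult: "\<And>x y. f (x * y) = f x * f y"
    and one: "f 1 = 1"
  shows "det (\<chi> i j. f (M $ i $ j) :: 'b^'n^'n) = f (det (M :: 'a^'n^'n))"
proof -
  have zero: "f 0 = 0" using add[of 0 0] by simp
  have uminus: "f (- x) = - f x" for x
    using add[of x "- x"] zero minus_unique[of "f x" "f (- x)"] by simp
  have prod: "f (prod g S) = (\<Prod>x\<in>S. f (g x))" for g and S :: "'n set"
    by (induct S rule: infinite_finite_induct) (simp_all add: one mult)
  have sum: "f (sum g S) = (\<Sum>x\<in>S. f (g x))" for g and S :: "('n \<Rightarrow> 'n) set"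
    by (induct S rule: infinite_finite_induct) (simp_all add: zero add)
  have sign: "f (of_int (sign p)) = of_int (sign p)" for p :: "'n \<Rightarrow> 'n"
    by (simp add: sign_def one uminus)
  show ?thesis
    unfolding det_def by (simp add: sum mult sign prod)
qed

lemma const_rf_eq_to_fract: "const_rf c = to_fract [:c:]"
  by (simp add: const_rf_def to_fract_def)

lemma const_rf_add: "const_rf (a + b) = const_rf a + const_rf b"
  by (simp add: const_rf_eq_to_fract flip: to_fract_add)

lemma const_rf_diff: "const_rf (a - b) = const_rf a - const_rf b"
  by (simp add: const_rf_eq_to_fract flip: to_fract_diff)

lemma const_rf_mult: "const_rf (a * b) = const_rf a * const_rf b"
  by (simp add: const_rf_eq_to_fract flip: to_fract_mult)

lemma const_rf_0: "const_rf 0 = 0"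
  by (simp add: const_rf_eq_to_fract)

lemma const_rf_1: "const_rf 1 = 1"
  by (simp add: const_rf_eq_to_fract flip: one_pCons)

lemma const_rf_sum: "const_rf (sum f S) = (\<Sum>x\<in>S. const_rf (f x))"
  by (induct S rule: infinite_finite_induct) (simp_all add: const_rf_0 const_rf_add)

lemma rmat_mult: "rmat (X ** Y) = rmat X ** rmat Y"
  by (simp add: rmat_def matrix_matrix_mult_def vec_eq_iff const_rf_sum const_rf_mult)

lemma rmat_add: "rmat (X + Y) = rmat X + rmat Y"
  by (simp add: rmat_def vec_eq_iff const_rf_add)

lemma rmat_diff: "rmat (X - Y) = rmat X - rmat Y"
  by (simp add: rmat_def vec_eq_iff const_rf_diff)

lemma rmat_0: "rmat 0 = 0"
  by (simp add: rmat_def vec_eq_iff const_rf_0)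

lemma rmat_1: "rmat (mat 1) = mat 1"
  by (simp add: rmat_def mat_def vec_eq_iff const_rf_0 const_rf_1)

lemma invertible_rmat: "invertible M \<Longrightarrow> invertible (rmat M)"
  unfolding invertible_def by (metis rmat_mult rmat_1)

lemma sI_matrix_mult_commute: "sI ** M = M ** sI"
  by (simp add: sI_def mat_def[symmetric] mat_matrix_mult_commute)

definition char_poly_matrix :: "real^'n^'n \<Rightarrow> real poly^'n^'n" where
  "char_poly_matrix B = (\<chi> i j. [:- B $ i $ j, if i = j then 1 else 0:])"

lemma sI_minus_rmat_eq: "sI - rmat B = (\<chi> i j. to_fract (char_poly_matrix B $ i $ j))"
  by (simp add: vec_eq_iff sI_def rmat_def char_poly_matrix_def svar_def const_rf_def
      to_fract_def Zero_fract_def)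

lemma det_sI_minus_rmat: "det (sI - rmat B) = to_fract (det (char_poly_matrix B))"
  unfolding sI_minus_rmat_eq by (rule det_map_ring_hom) simp_all

text \<open>Only the diagonal term of the Leibniz expansion reaches degree \<open>n\<close>: every other
  permutation moves some index and so picks up a constant entry.\<close>
lemma coeff_det_char_poly_matrix: "coeff (det (char_poly_matrix B)) CARD('n) = 1"
  for B :: "real^'n^'n"
proof -
  let ?term = "\<lambda>p. of_int (sign p) * (\<Prod>i\<in>UNIV. char_poly_matrix B $ i $ p i)"
  have "coeff (?term p) CARD('n) = (if p = id then 1 else 0)"
    if "p permutes (UNIV :: 'n set)" for p
  proof (cases "p = id")
    case True
    have "degree (\<Prod>i\<in>UNIV. char_poly_matrix B $ i $ i) = CARD('n)"
      by (subst degree_prod_eq_sum_degree) (simp_all add: char_poly_matrix_def)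
    moreover have "lead_coeff (\<Prod>i\<in>UNIV. char_poly_matrix B $ i $ i) = 1"
      by (simp add: lead_coeff_prod char_poly_matrix_def)
    ultimately show ?thesis using True by (simp add: sign_id)
  next
    case False
    then obtain i0 where i0: "p i0 \<noteq> i0" by (metis eq_id_iff)
    have "degree (?term p) \<le> degree (\<Prod>i\<in>UNIV. char_poly_matrix B $ i $ p i)"
      using degree_mult_le[of "of_int (sign p)"] by simp
    also have "\<dots> \<le> (\<Sum>i\<in>UNIV. degree (char_poly_matrix B $ i $ p i))"
      using degree_prod_sum_le[of UNIV "\<lambda>i. char_poly_matrix B $ i $ p i"] by (simp add: o_def)
    also have "\<dots> = card {i. i = p i}"
      by (simp add: char_poly_matrix_def sum.If_cases Compl_eq)
    also have "\<dots> < CARD('n)"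
      using i0 by (intro psubset_card_mono) (auto simp: set_eq_iff)
    finally show ?thesis using False by (simp add: coeff_eq_0)
  qed
  then have "coeff (det (char_poly_matrix B)) CARD('n) =
      (\<Sum>p\<in>{p. p permutes (UNIV :: 'n set)}. if p = id then 1 else 0)"
    unfolding det_def coeff_sum by (intro sum.cong) auto
  then show ?thesis by (simp add: permutes_id)
qed

lemma invertible_sI_minus_rmat: "invertible (sI - rmat B)"
proof -
  have "det (char_poly_matrix B) \<noteq> 0"
    using coeff_det_char_poly_matrix[of B] by auto
  then show ?thesis by (simp add: invertible_det_nz det_sI_minus_rmat)
qed


definition stable_poly :: "real poly \<Rightarrow> bool" where
  "stable_poly d \<longleftrightarrow> (\<forall>z::complex. Re z \<ge> 0 \<longrightarrow> poly (map_poly complex_of_real d) z \<noteq> 0)"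

lemma RH_inf_fun_iff:
  "RH_inf_fun f \<longleftrightarrow> (\<exists>num den. f = Fract num den \<and> degree num \<le> degree den \<and> stable_poly den)"
  by (simp add: RH_inf_fun_def stable_poly_def)

lemma stable_poly_nonzero: "stable_poly d \<Longrightarrow> d \<noteq> 0"
  unfolding stable_poly_def by (metis map_poly_0 order_refl poly_0 zero_complex.simps(1))

lemma map_poly_of_real_mult:
  "map_poly of_real (p * q) = map_poly of_real p * (map_poly of_real q :: 'a::{real_algebra_1,comm_semiring_0} poly)"
  by (simp add: poly_eq_iff coeff_map_poly coeff_mult of_real_sum)

lemma stable_poly_mult: "stable_poly a \<Longrightarrow> stable_poly b \<Longrightarrow> stable_poly (a * b)"
  by (simp add: stable_poly_def map_poly_of_real_mult)

lemma RH_inf_fun_const: "RH_inf_fun (const_rf c)"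
  unfolding RH_inf_fun_iff const_rf_def by (rule exI[of _ "[:c:]"], rule exI[of _ 1]) (simp add: stable_poly_def)

lemma RH_inf_fun_add:
  assumes "RH_inf_fun f" "RH_inf_fun g"
  shows "RH_inf_fun (f + g)"
proof -
  obtain n1 d1 where f: "f = Fract n1 d1" "degree n1 \<le> degree d1" "stable_poly d1"
    using assms(1) RH_inf_fun_iff by blast
  obtain n2 d2 where g: "g = Fract n2 d2" "degree n2 \<le> degree d2" "stable_poly d2"
    using assms(2) RH_inf_fun_iff by blast
  have nz: "d1 \<noteq> 0" "d2 \<noteq> 0" using f g stable_poly_nonzero by auto
  have "f + g = Fract (n1 * d2 + n2 * d1) (d1 * d2)"
    using f g nz by (simp add: mult.commute)
  moreover have "degree (n1 * d2 + n2 * d1) \<le> degree (d1 * d2)"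
    using f g nz degree_mult_le[of n1 d2] degree_mult_le[of n2 d1]
    by (intro degree_add_le) (simp_all add: degree_mult_eq)
  ultimately show ?thesis
    unfolding RH_inf_fun_iff using f g stable_poly_mult by blast
qed

lemma RH_inf_fun_mult:
  assumes "RH_inf_fun f" "RH_inf_fun g"
  shows "RH_inf_fun (f * g)"
proof -
  obtain n1 d1 where f: "f = Fract n1 d1" "degree n1 \<le> degree d1" "stable_poly d1"
    using assms(1) RH_inf_fun_iff by blast
  obtain n2 d2 where g: "g = Fract n2 d2" "degree n2 \<le> degree d2" "stable_poly d2"
    using assms(2) RH_inf_fun_iff by blast
  have nz: "d1 \<noteq> 0" "d2 \<noteq> 0" using f g stable_poly_nonzero by auto
  have "degree (n1 * n2) \<le> degree (d1 * d2)"
    using degree_mult_le[of n1 n2] f g nz by (simp add: degree_mult_eq)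
  then show ?thesis
    unfolding RH_inf_fun_iff using f g stable_poly_mult by (intro exI[of _ "n1 * n2"] exI[of _ "d1 * d2"]) auto
qed

lemma RH_inf_fun_sum: "(\<And>x. x \<in> S \<Longrightarrow> RH_inf_fun (f x)) \<Longrightarrow> RH_inf_fun (sum f S)"
  by (induct S rule: infinite_finite_induct)
    (auto intro: RH_inf_fun_add RH_inf_fun_const[of 0, unfolded const_rf_0])

lemma RH_inf_mult: "RH_inf A \<Longrightarrow> RH_inf B \<Longrightarrow> RH_inf (A ** B)"
  unfolding RH_inf_def matrix_matrix_mult_def by (auto intro!: RH_inf_fun_sum RH_inf_fun_mult)

lemma RH_inf_rmat: "RH_inf (rmat B)"
  unfolding RH_inf_def rmat_def by (auto intro: RH_inf_fun_const)

lemma annihilator_mult_projection: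
  fixes R :: "'a::comm_ring_1^'n^'p"
  assumes C1: "Pd ** P + Pbd ** Pb = mat 1" and "P ** L = 0" and "invertible (Pb ** L)"
    and "R ** L = 0"
  shows "R ** Pd ** P = R"
proof -
  have "L = (Pd ** P + Pbd ** Pb) ** L" by (simp add: C1)
  also have "\<dots> = Pbd ** (Pb ** L)"
    by (simp add: matrix_add_rdistrib \<open>P ** L = 0\<close> flip: matrix_mul_assoc)
  finally have "R ** Pbd ** (Pb ** L) = 0"
    using \<open>R ** L = 0\<close> by (metis matrix_mul_assoc)
  then have "R ** Pbd = R ** Pbd ** ((Pb ** L) ** matrix_inv (Pb ** L))"
    using invertible_imp_matrix_inv(1)[OF \<open>invertible (Pb ** L)\<close>] by simp
  also have "\<dots> = 0"
    using \<open>R ** Pbd ** (Pb ** L) = 0\<close> by (metis matrix_mul_assoc times0_left)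
  finally have "R ** Pbd = 0" .
  then have "R ** (Pd ** P + Pbd ** Pb) = R ** Pd ** P"
    by (simp add: matrix_add_ldistrib matrix_mul_assoc flip: matrix_mul_assoc[of R Pbd])
  then show ?thesis by (simp add: C1)
qed

text \<open>The intertwining relation \<open>K P = P N + P A P\<^sup>\<dagger>\<^sub>b P\<^sub>b\<close>, solved for \<open>P\<close>.\<close>
lemma resolvent_factorization:
  assumes C1: "Pd ** P + Pbd ** Pb = mat 1"
  shows "rmat P - matrix_inv (sI - rmat (P ** A ** Pd)) ** rmat (P ** A ** Pbd ** Pb) =
    matrix_inv (sI - rmat (P ** A ** Pd)) ** rmat P ** (sI - rmat A)"
proof -
  let ?K = "sI - rmat (P ** A ** Pd)"
  have "P ** A ** Pd ** P + P ** A ** Pbd ** Pb = P ** A ** (Pd ** P + Pbd ** Pb)"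
    by (simp add: matrix_add_ldistrib matrix_mul_assoc)
  then have PA: "P ** A ** Pd ** P = P ** A - P ** A ** Pbd ** Pb"
    by (simp add: C1 eq_diff_eq)
  have "?K ** rmat P = sI ** rmat P - rmat (P ** A ** Pd ** P)"
    by (simp add: matrix_diff_rdistrib rmat_mult)
  also have "\<dots> = rmat P ** (sI - rmat A) + rmat (P ** A ** Pbd ** Pb)"
    by (simp add: PA rmat_diff rmat_mult matrix_diff_ldistrib sI_matrix_mult_commute)
  finally have KP: "?K ** rmat P = rmat P ** (sI - rmat A) + rmat (P ** A ** Pbd ** Pb)" .
  have "rmat P = matrix_inv ?K ** (?K ** rmat P)"
    by (metis invertible_imp_matrix_inv(2)[OF invertible_sI_minus_rmat] matrix_mul_assoc
        matrix_mul_lid)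
  also have "\<dots> = matrix_inv ?K ** rmat P ** (sI - rmat A) +
      matrix_inv ?K ** rmat (P ** A ** Pbd ** Pb)"
    by (simp add: KP matrix_add_ldistrib matrix_mul_assoc)
  finally show ?thesis by (metis add_diff_cancel_right')
qed

lemma sI_minus_rmat_compression:
  assumes "R ** rmat Pd ** rmat P = R"
  shows "R ** rmat Pd ** (sI - rmat (P ** A ** Pd)) = R ** (sI - rmat A) ** rmat Pd"
proof -
  from assms have "R ** rmat Pd ** rmat (P ** A ** Pd) = R ** rmat A ** rmat Pd"
    by (simp add: rmat_mult matrix_mul_assoc)
  moreover have "R ** rmat Pd ** sI = R ** sI ** rmat Pd"
    by (metis sI_matrix_mult_commute matrix_mul_assoc)
  ultimately show ?thesis
    by (simp add: matrix_diff_ldistrib matrix_diff_rdistrib)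
qed

lemma resolvent_factor_annihilates:
  assumes "P ** L = 0"
  shows "Qh ** (matrix_inv K ** rmat P ** (sI - rmat A)) ** (matrix_inv (sI - rmat A) ** rmat L) = 0"
proof -
  have "Qh ** (matrix_inv K ** rmat P ** (sI - rmat A)) ** (matrix_inv (sI - rmat A) ** rmat L) =
      Qh ** matrix_inv K ** rmat P ** ((sI - rmat A) ** matrix_inv (sI - rmat A)) ** rmat L"
    by (simp add: matrix_mul_assoc)
  also have "\<dots> = Qh ** matrix_inv K ** rmat (P ** L)"
    by (simp add: invertible_imp_matrix_inv(1)[OF invertible_sI_minus_rmat] rmat_mult
        matrix_mul_assoc)
  finally show ?thesis by (simp add: assms rmat_0)
qed

lemma annihilator_factors_through_resolvent:
  assumes C1: "Pd ** P + Pbd ** Pb = mat 1" and C3: "P ** L = 0" "invertible (Pb ** L)"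
    and QG: "Q ** (matrix_inv (sI - rmat A) ** rmat L) = 0"
  shows "Q = Q ** rmat Pd ** (matrix_inv (sI - rmat (P ** A ** Pd)) ** rmat P ** (sI - rmat A))"
proof -
  let ?N = "sI - rmat A" and ?K = "sI - rmat (P ** A ** Pd)"
  have N: "?N ** matrix_inv ?N = mat 1" "matrix_inv ?N ** ?N = mat 1"
    and K: "?K ** matrix_inv ?K = mat 1"
    using invertible_imp_matrix_inv[OF invertible_sI_minus_rmat] by blast+
  define R where "R = Q ** matrix_inv ?N"
  have RP: "R ** rmat Pd ** rmat P = R"
    using annihilator_mult_projection[of "rmat Pd" "rmat P" "rmat Pbd" "rmat Pb" "rmat L" R]
      C1 C3 QG
    by (simp add: R_def invertible_rmat matrix_mul_assoc flip: rmat_mult rmat_add rmat_1 rmat_0)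
  have "Q = R ** ?N"
    by (simp add: R_def N flip: matrix_mul_assoc)
  also have "\<dots> = R ** rmat Pd ** (?K ** matrix_inv ?K) ** rmat P ** ?N"
    by (simp add: K RP)
  also have "\<dots> = R ** ?N ** rmat Pd ** (matrix_inv ?K ** rmat P ** ?N)"
    using sI_minus_rmat_compression[OF RP, of A] by (simp add: matrix_mul_assoc)
  also have "\<dots> = Q ** rmat Pd ** (matrix_inv ?K ** rmat P ** ?N)"
    by (simp add: R_def N flip: matrix_mul_assoc)
  finally show ?thesis .
qed

theorem lemma3:
  fixes A :: "real^'n^'n" and L :: "real^'m^'n"
    and P :: "real^'n^'k" and Pd :: "real^'k^'n"
    and Pb :: "real^'n^'m" and Pbd :: "real^'m^'n"
    and Q :: "rfun^'n^'p"
  assumes hurA: "hurwitz A"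
    and PPd: "P ** Pd = mat 1" and PbPbd: "Pb ** Pbd = mat 1"
    and C1: "Pd ** P + Pbd ** Pb = mat 1"
    and C2: "hurwitz (P ** A ** Pd)" "hurwitz (Pb ** A ** Pbd)"
    and C3: "P ** L = 0" "invertible (Pb ** L)"
    and RHQ: "RH_inf Q"
  shows "Q ** (matrix_inv (sI - rmat A) ** rmat L) = 0 \<longleftrightarrow>
         (\<exists>Qh :: rfun^'k^'p. RH_inf Qh \<and>
            Q = Qh ** (rmat P - matrix_inv (sI - rmat (P ** A ** Pd)) ** rmat (P ** A ** Pbd ** Pb)))"
  unfolding resolvent_factorization[OF C1]
proof
  assume "Q ** (matrix_inv (sI - rmat A) ** rmat L) = 0"
  then have "Q = Q ** rmat Pd **
      (matrix_inv (sI - rmat (P ** A ** Pd)) ** rmat P ** (sI - rmat A))"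
    using annihilator_factors_through_resolvent C1 C3 by blast
  moreover have "RH_inf (Q ** rmat Pd)"
    using RH_inf_mult[OF RHQ RH_inf_rmat] .
  ultimately show "\<exists>Qh. RH_inf Qh \<and>
      Q = Qh ** (matrix_inv (sI - rmat (P ** A ** Pd)) ** rmat P ** (sI - rmat A))"
    by blast
next
  assume "\<exists>Qh. RH_inf Qh \<and>
      Q = Qh ** (matrix_inv (sI - rmat (P ** A ** Pd)) ** rmat P ** (sI - rmat A))"
  then show "Q ** (matrix_inv (sI - rmat A) ** rmat L) = 0"
    using resolvent_factor_annihilates[OF C3(1)] by auto
qed

end
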